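(* Fix integers $t,\omega$ with $2\le t\le\omega$. For $\Delta\ge1$ let $a=\lfloor\Delta/(\omega-1)\rfloor$. Then as $\Delta\to\infty$, \[ f_t(\Delta,\omega)=(1+o(1))\,\rho_t\big(T(\Delta+a,\omega)\big)=(1+o(1))\,\frac1t\binom{\omega-1}{t-1}\Big(\frac{\Delta}{\omega-1}\Big)^{t-1}. \]
   Context: $\mathcal{G}(\Delta,\omega)$ denotes the class of finite simple graphs $G$ with maximum degree $\Delta(G)\le\Delta$ and clique number $\omega(G)\le\omega$. $k_t(G)$ is the number of copies of $K_t$ in $G$ and $\rho_t(G)=k_t(G)/|V(G)|$. $f_t(\Delta,\omega)=\sup\{\rho_t(G): G\in\mathcal{G}(\Delta,\omega),\ |V(G)|\ge 1\}$. $T(n,r)$ denotes the $r$-partite Turán graph on $n$ vertices: the complete $r$-partite graph on $n$ vertices whose part sizes are all $\lfloor n/r\rfloor$ or $\lceil n/r\rceil$ (when $n<r$ this is $K_n$). *)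

theory Defs
  imports "HOL-Analysis.Analysis" "HOL-Library.Landau_Symbols"
begin

text \<open>Every finite simple graph is isomorphic to one
  of this form, so the supremum below ranges over all finite simple graphs.\<close>

definition simple_graph :: "nat set \<Rightarrow> nat set set \<Rightarrow> bool" where
  "simple_graph V E \<longleftrightarrow> finite V \<and> (\<forall>e\<in>E. e \<subseteq> V \<and> card e = 2)"

definition degree :: "nat set \<Rightarrow> nat set set \<Rightarrow> nat \<Rightarrow> nat" where
  "degree V E v = card {u \<in> V. {u, v} \<in> E}"

definition max_degree :: "nat set \<Rightarrow> nat set set \<Rightarrow> nat" where
  "max_degree V E = Max (insert 0 (degree V E ` V))"

definition is_clique :: "nat set \<Rightarrow> nat set set \<Rightarrow> nat set \<Rightarrow> bool" where
  "is_clique V E K \<longleftrightarrow> K \<subseteq> V \<and> (\<forall>u\<in>K. \<forall>v\<in>K. u \<noteq> v \<longrightarrow> {u, v} \<in> E)"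

definition clique_number :: "nat set \<Rightarrow> nat set set \<Rightarrow> nat" where
  "clique_number V E = Max (card ` {K. is_clique V E K})"

definition num_cliques :: "nat \<Rightarrow> nat set \<Rightarrow> nat set set \<Rightarrow> nat" where
  "num_cliques t V E = card {K. is_clique V E K \<and> card K = t}"

definition rho :: "nat \<Rightarrow> nat set \<Rightarrow> nat set set \<Rightarrow> real" where
  "rho t V E = real (num_cliques t V E) / real (card V)"

definition graph_class :: "nat \<Rightarrow> nat \<Rightarrow> (nat set \<times> nat set set) set" where
  "graph_class \<Delta> \<omega> = {(V, E). simple_graph V E \<and> max_degree V E \<le> \<Delta> \<and> clique_number V E \<le> \<omega>}"

definition f_sup :: "nat \<Rightarrow> nat \<Rightarrow> nat \<Rightarrow> real" where
  "f_sup t \<Delta> \<omega> = Sup {rho t V E | V E. (V, E) \<in> graph_class \<Delta> \<omega> \<and> card V \<ge> 1}"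

text \<open>Turan graph T(n,r): vertices 0..n-1, parts are residue classes mod r
  (part sizes floor(n/r) or ceil(n/r)); edges join vertices in different parts.\<close>
definition turan_V :: "nat \<Rightarrow> nat set" where
  "turan_V n = {0..<n}"

definition turan_E :: "nat \<Rightarrow> nat \<Rightarrow> nat set set" where
  "turan_E n r = {{i, j} | i j. i < n \<and> j < n \<and> i mod r \<noteq> j mod r}"

end

theory Submission
  imports Defs
begin

(*
  A copy of K_t through a vertex v is v together with a copy of K_(t-1) inside
  the neighbourhood N(v), which has at most Delta vertices and clique number at most omega - 1.
  Put weight 1 on the vertices of N(v) and consider the sum over (t-1)-cliques of the products
  of the weights.  This polynomial is affine in the weights of any two non-adjacent vertices, so
  all weight of one of them can be moved onto the other without decreasing it; repeating this,
  the support shrinks to a clique of at most omega - 1 vertices, where Maclaurin's inequality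
  bounds the polynomial by C(omega-1, t-1) (Delta/(omega-1))^(t-1).  Counting each K_t at each
  of its t vertices gives rho_t(G) <= C(omega-1, t-1) (Delta/(omega-1))^(t-1) / t.

  With a = Delta div (omega-1), the Turan graph T(Delta + a, omega) has residue
  classes of size at least a, hence maximum degree at most Delta, and choosing t classes and one
  of their first a members gives C(omega, t) a^t copies of K_t.  This is the upper bound up to
  the factor (1 - (omega-1)/Delta)^t, which tends to 1.
*)

section \<open>Maclaurin's inequality\<close>

lemma bernoulli_inequality_homogeneous:
  fixes a b :: real
  assumes "a \<ge> 0" "a + b \<ge> 0"
  shows "a ^ Suc k + real (Suc k) * a ^ k * b \<le> (a + b) ^ Suc k"
proof (induction k)
  case (Suc k)
  have "(a + b) * (a ^ Suc k + real (Suc k) * a ^ k * b) \<le> (a + b) * (a + b) ^ Suc k"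
    using Suc.IH assms(2) by (rule mult_left_mono)
  moreover have "(a + b) * (a ^ Suc k + real (Suc k) * a ^ k * b)
     = a ^ Suc (Suc k) + real (Suc (Suc k)) * a ^ Suc k * b + real (Suc k) * a ^ k * b\<^sup>2"
    by (simp add: algebra_simps power2_eq_square)
  moreover have "real (Suc k) * a ^ k * b\<^sup>2 \<ge> 0"
    using assms(1) by simp
  ultimately show ?case by simp
qed simp

lemma prod_of_bool_mem:
  "finite K \<Longrightarrow> (\<Prod>i\<in>K. of_bool (i \<in> N) :: 'b :: comm_semiring_1) = of_bool (K \<subseteq> N)"
  by (induction K rule: finite_induct) auto

lemma sum_update_merge:
  fixes f :: "'a \<Rightarrow> 'b :: comm_monoid_add"
  assumes "finite V" "a \<in> V" "b \<in> V" "a \<noteq> b"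
  shows "sum (f(a := f a + f b, b := 0)) V = sum f V"
proof -
  have split: "sum g V = g a + (g b + sum g (V - {a} - {b}))" for g :: "'a \<Rightarrow> 'b"
    using assms by (simp add: sum.remove[of V a] sum.remove[of "V - {a}" b])
  have "sum (f(a := f a + f b, b := 0)) (V - {a} - {b}) = sum f (V - {a} - {b})"
    by (rule sum.cong) auto
  then show ?thesis
    using assms(4) by (subst (1 2) split) (simp add: add.assoc)
qed

definition elem_sym :: "'a set \<Rightarrow> nat \<Rightarrow> ('a \<Rightarrow> real) \<Rightarrow> real" where
  "elem_sym A s x = (\<Sum>K | K \<subseteq> A \<and> card K = s. \<Prod>i\<in>K. x i)"

lemma elem_sym_0: "finite A \<Longrightarrow> elem_sym A 0 x = 1"
proof -
  assume "finite A"
  then have "{K. K \<subseteq> A \<and> card K = 0} = {{}}"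
    by (auto dest: card_0_eq[OF finite_subset])
  then show ?thesis by (simp add: elem_sym_def)
qed

lemma elem_sym_empty_Suc: "elem_sym {} (Suc s) x = 0"
  by (simp add: elem_sym_def)

lemma elem_sym_insert:
  assumes "finite A" "a \<notin> A"
  shows "elem_sym (insert a A) (Suc s) x = elem_sym A (Suc s) x + x a * elem_sym A s x"
proof -
  let ?S = "\<lambda>k. {K. K \<subseteq> A \<and> card K = k}"
  have finite_S: "finite (?S k)" for k
    using assms(1) by simp
  have subsets_insert: "{K. K \<subseteq> insert a A \<and> card K = Suc s} = ?S (Suc s) \<union> insert a ` ?S s"
  proof -
    have "card (insert a T) = Suc s \<longleftrightarrow> card T = s" if "T \<subseteq> A" for T
      using that assms finite_subset by (metis card_insert_disjoint nat.inject subsetD)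
    then show ?thesis
      unfolding subset_insert_lemma by blast
  qed
  have "inj_on (insert a) (?S s)"
    using assms(2) by (intro inj_onI) (metis Diff_insert_absorb mem_Collect_eq subsetD)
  moreover have "(\<Prod>i\<in>insert a K. x i) = x a * (\<Prod>i\<in>K. x i)" if "K \<in> ?S s" for K
    using that assms finite_subset by (metis (no_types, lifting) mem_Collect_eq prod.insert subsetD)
  ultimately have "(\<Sum>K\<in>insert a ` ?S s. \<Prod>i\<in>K. x i) = x a * elem_sym A s x"
    by (simp add: sum.reindex elem_sym_def sum_distrib_left)
  moreover have "?S (Suc s) \<inter> insert a ` ?S s = {}"
    using assms(2) by blast
  ultimately show ?thesis
    unfolding elem_sym_def subsets_insert by (simp add: sum.union_disjoint finite_S)
qed

lemma binomial_mean_power_step: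
  fixes y z :: real
  assumes "y \<ge> 0" "z \<ge> 0"
  shows "real (m choose Suc k) * y ^ Suc k + z * (real (m choose k) * y ^ k)
         \<le> real (Suc m choose Suc k) * ((real m * y + z) / real (Suc m)) ^ Suc k"
proof -
  define w where "w = (z - y) / real (Suc m)"
  have mean: "(real m * y + z) / real (Suc m) = y + w"
    by (simp add: w_def field_simps)
  have "real (Suc m choose Suc k) * real (Suc k) = real (Suc m) * real (m choose k)"
    by (metis Suc_times_binomial_eq of_nat_mult)
  then have absorb: "real (Suc m choose Suc k) * real (Suc k) * w = real (m choose k) * (z - y)"
    unfolding w_def by (simp only:) (simp del: of_nat_Suc)
  have "real (m choose Suc k) * y ^ Suc k + z * (real (m choose k) * y ^ k)
        = real (Suc m choose Suc k) * y ^ Suc k + y ^ k * (real (m choose k) * (z - y))"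
    by (simp add: algebra_simps)
  also have "\<dots> = real (Suc m choose Suc k) * (y ^ Suc k + real (Suc k) * y ^ k * w)"
    by (simp only: absorb[symmetric]) (simp add: algebra_simps)
  also have "\<dots> \<le> real (Suc m choose Suc k) * (y + w) ^ Suc k"
    using assms by (intro mult_left_mono bernoulli_inequality_homogeneous)
      (auto simp: mean[symmetric])
  finally show ?thesis unfolding mean .
qed

lemma elem_sym_le_maclaurin:
  assumes "finite A" "\<And>i. i \<in> A \<Longrightarrow> x i \<ge> 0"
  shows "elem_sym A s x \<le> real (card A choose s) * (sum x A / real (card A)) ^ s"
  using assms
proof (induction A arbitrary: s rule: finite_induct)
  case empty
  then show ?case by (cases s) (auto simp: elem_sym_0 elem_sym_empty_Suc)
next
  case (insert a A)
  show ?case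
  proof (cases s)
    case 0
    then show ?thesis using insert.hyps by (simp add: elem_sym_0)
  next
    case (Suc k)
    define y where "y = sum x A / real (card A)"
    have sum_A: "sum x A = real (card A) * y"
      using insert.hyps by (cases "A = {}") (auto simp: y_def)
    have nonneg: "y \<ge> 0" "x a \<ge> 0"
      using insert.prems by (auto simp: y_def intro!: sum_nonneg divide_nonneg_nonneg)
    have IH: "elem_sym A j x \<le> real (card A choose j) * y ^ j" for j
      using insert.IH insert.prems by (simp add: y_def)
    have "elem_sym (insert a A) s x = elem_sym A (Suc k) x + x a * elem_sym A k x"
      using insert.hyps by (simp add: Suc elem_sym_insert)
    also have "\<dots> \<le> real (card A choose Suc k) * y ^ Suc k + x a * (real (card A choose k) * y ^ k)"
      using IH nonneg by (intro add_mono mult_left_mono)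
    also have "\<dots> \<le> real (Suc (card A) choose Suc k)
                    * ((real (card A) * y + x a) / real (Suc (card A))) ^ Suc k"
      using nonneg by (rule binomial_mean_power_step)
    also have "\<dots> = real (card (insert a A) choose s) * (sum x (insert a A) / real (card (insert a A))) ^ s"
      using insert.hyps by (simp add: Suc sum_A add.commute)
    finally show ?thesis .
  qed
qed

lemma binomial_div_power_mono:
  assumes "1 \<le> q" "q \<le> r"
  shows "real (q choose s) / real q ^ s \<le> real (r choose s) / real r ^ s"
proof -
  define x :: "nat \<Rightarrow> real" where "x i = of_bool (i \<in> {..<q})" for i
  have "elem_sym {..<r} s x = (\<Sum>K | K \<subseteq> {..<r} \<and> card K = s. of_bool (K \<subseteq> {..<q}))"
    unfolding elem_sym_def x_def
    by (intro sum.cong refl prod_of_bool_mem) (auto intro: finite_subset)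
  also have "\<dots> = real (card {K. K \<subseteq> {..<q} \<and> card K = s})"
  proof -
    have "{K. K \<subseteq> {..<r} \<and> card K = s} \<inter> {K. K \<subseteq> {..<q}} = {K. K \<subseteq> {..<q} \<and> card K = s}"
      using assms(2) by auto
    then show ?thesis
      by simp
  qed
  finally have "elem_sym {..<r} s x = real (q choose s)"
    by (simp add: n_subsets)
  moreover have "sum x {..<r} = real q"
  proof -
    have "{..<r} \<inter> {i. i < q} = {..<q}"
      using assms(2) by auto
    then show ?thesis by (simp add: x_def)
  qed
  ultimately have "real (q choose s) \<le> real (r choose s) * (real q / real r) ^ s"
    using elem_sym_le_maclaurin[of "{..<r}" x s] by (simp add: x_def)
  then show ?thesis
    using assms by (simp add: power_divide field_simps)
qed

section \<open>Weighted clique counts\<close>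

definition cliques :: "nat set \<Rightarrow> nat set set \<Rightarrow> nat \<Rightarrow> nat set set" where
  "cliques V E s = {K. is_clique V E K \<and> card K = s}"

lemma finite_cliques: "finite V \<Longrightarrow> finite (cliques V E s)"
  by (rule finite_subset[of _ "Pow V"]) (auto simp: cliques_def is_clique_def)

lemma finite_clique: "finite V \<Longrightarrow> is_clique V E K \<Longrightarrow> finite K"
  unfolding is_clique_def using finite_subset by blast

definition clique_poly :: "nat set \<Rightarrow> nat set set \<Rightarrow> nat \<Rightarrow> (nat \<Rightarrow> real) \<Rightarrow> real" where
  "clique_poly V E s x = (\<Sum>K\<in>cliques V E s. \<Prod>i\<in>K. x i)"

lemma clique_poly_split:
  assumes "finite V" "u \<noteq> v" "{u, v} \<notin> E" "\<And>i. i \<noteq> u \<Longrightarrow> i \<noteq> v \<Longrightarrow> y i = x i"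
  shows "clique_poly V E s y =
           (\<Sum>K\<in>cliques V E s \<inter> {K. u \<notin> K \<and> v \<notin> K}. \<Prod>i\<in>K. x i)
           + y u * (\<Sum>K\<in>cliques V E s \<inter> {K. u \<in> K}. \<Prod>i\<in>K - {u}. x i)
           + y v * (\<Sum>K\<in>cliques V E s \<inter> {K. v \<in> K}. \<Prod>i\<in>K - {v}. x i)"
proof -
  have "(\<Prod>i\<in>K. y i) = of_bool (u \<notin> K \<and> v \<notin> K) * (\<Prod>i\<in>K. x i)
          + of_bool (u \<in> K) * (y u * (\<Prod>i\<in>K - {u}. x i))
          + of_bool (v \<in> K) * (y v * (\<Prod>i\<in>K - {v}. x i))"
    if K: "K \<in> cliques V E s" for K
  proof -
    have "finite K"
      using K assms(1) finite_clique by (auto simp: cliques_def)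
    moreover have "\<not> (u \<in> K \<and> v \<in> K)"
      using K assms(2,3) by (auto simp: cliques_def is_clique_def)
    ultimately show ?thesis
      using assms(2,4) by (auto simp: prod.remove intro!: prod.cong) metis+
  qed
  then show ?thesis
    unfolding clique_poly_def using assms(1)
    by (simp add: sum.distrib sum_distrib_left finite_cliques cong: sum.cong)
qed

lemma clique_poly_le_merge:
  assumes "finite V" "u \<noteq> v" "{u, v} \<notin> E" "x u \<ge> 0" "x v \<ge> 0"
  shows "clique_poly V E s x \<le> clique_poly V E s (x(u := x u + x v, v := 0))
       \<or> clique_poly V E s x \<le> clique_poly V E s (x(v := x v + x u, u := 0))"
proof -
  obtain N A B where split:
    "\<And>y. (\<And>i. i \<noteq> u \<Longrightarrow> i \<noteq> v \<Longrightarrow> y i = x i) \<Longrightarrow> clique_poly V E s y = N + y u * A + y v * B"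
    using clique_poly_split[OF assms(1-3)] by blast
  have "clique_poly V E s x = N + x u * A + x v * B"
    by (rule split) simp
  moreover have "clique_poly V E s (x(u := x u + x v, v := 0)) = N + (x u + x v) * A"
    using assms(2) by (subst split) auto
  moreover have "clique_poly V E s (x(v := x v + x u, u := 0)) = N + (x u + x v) * B"
    using assms(2) by (subst split) auto
  moreover have "x v * B \<le> x v * A \<or> x u * A \<le> x u * B"
    using assms(4,5) by (cases "B \<le> A") (auto intro: mult_left_mono)
  ultimately show ?thesis
    by (simp add: algebra_simps)
qed

lemma clique_poly_eq_elem_sym:
  assumes "finite V" "is_clique V E S" "\<And>i. i \<in> V - S \<Longrightarrow> x i = 0"
  shows "clique_poly V E s x = elem_sym S s x"
  unfolding clique_poly_def elem_sym_def
proof (rule sum.mono_neutral_right)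
  show "finite (cliques V E s)"
    using assms(1) by (rule finite_cliques)
  show "{K. K \<subseteq> S \<and> card K = s} \<subseteq> cliques V E s"
    using assms(2) unfolding cliques_def is_clique_def by blast
  show "\<forall>K\<in>cliques V E s - {K. K \<subseteq> S \<and> card K = s}. (\<Prod>i\<in>K. x i) = 0"
  proof
    fix K assume "K \<in> cliques V E s - {K. K \<subseteq> S \<and> card K = s}"
    then have "K \<subseteq> V" "\<not> K \<subseteq> S"
      unfolding cliques_def is_clique_def by blast+
    then show "(\<Prod>i\<in>K. x i) = 0"
      using assms(1,3) finite_subset by (intro prod_zero) blast+
  qed
qed

lemma clique_poly_le_binomial_of_clique:
  assumes "finite V" "is_clique V E S" "card S \<le> r"
    and "\<And>i. i \<in> V \<Longrightarrow> x i \<ge> 0" "\<And>i. i \<in> V - S \<Longrightarrow> x i = 0"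
  shows "clique_poly V E s x \<le> real (r choose s) * (sum x V / real r) ^ s"
proof -
  have "S \<subseteq> V" "finite S"
    using assms(1,2) finite_clique by (auto simp: is_clique_def)
  then have sum_S: "sum x S = sum x V"
    using assms(1,5) by (intro sum.mono_neutral_left) auto
  have sum_nonneg: "0 \<le> sum x V"
    using assms(4) by (simp add: sum_nonneg)
  have "clique_poly V E s x = elem_sym S s x"
    using assms(1,2,5) by (rule clique_poly_eq_elem_sym)
  also have "\<dots> \<le> real (card S choose s) * (sum x S / real (card S)) ^ s"
    using \<open>finite S\<close> assms(4) \<open>S \<subseteq> V\<close> by (intro elem_sym_le_maclaurin) auto
  also have "\<dots> \<le> real (r choose s) * (sum x V / real r) ^ s"
  proof (cases "card S = 0")
    case True
    then show ?thesis
      using sum_nonneg by (cases s) auto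
  next
    case False
    then have "real (card S choose s) / real (card S) ^ s \<le> real (r choose s) / real r ^ s"
      using assms(3) by (intro binomial_div_power_mono) auto
    then have "real (card S choose s) / real (card S) ^ s * sum x V ^ s
               \<le> real (r choose s) / real r ^ s * sum x V ^ s"
      using sum_nonneg by (intro mult_right_mono) auto
    then show ?thesis
      by (simp add: sum_S power_divide)
  qed
  finally show ?thesis .
qed

theorem clique_poly_le_binomial:
  assumes "finite V" "\<And>i. i \<in> V \<Longrightarrow> x i \<ge> 0"
    and "\<And>K. is_clique V E K \<Longrightarrow> K \<subseteq> {i\<in>V. x i \<noteq> 0} \<Longrightarrow> card K \<le> r"
  shows "clique_poly V E s x \<le> real (r choose s) * (sum x V / real r) ^ s"
  using assms(2,3)
proof (induction "card {i\<in>V. x i \<noteq> 0}" arbitrary: x rule: less_induct)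
  case less
  define S where "S = {i\<in>V. x i \<noteq> 0}"
  show ?case
  proof (cases "is_clique V E S")
    case True
    then show ?thesis
      using assms(1) less.prems by (intro clique_poly_le_binomial_of_clique[of V E S]) (auto simp: S_def)
  next
    case False
    moreover have "S \<subseteq> V"
      by (simp add: S_def)
    ultimately obtain u v where uv: "u \<in> S" "v \<in> S" "u \<noteq> v" "{u, v} \<notin> E"
      unfolding is_clique_def by blast
    have merged: "clique_poly V E s (x(a := x a + x b, b := 0))
                    \<le> real (r choose s) * (sum x V / real r) ^ s"
      if ab: "a \<in> S" "b \<in> S" "a \<noteq> b" for a b
    proof -
      let ?y = "x(a := x a + x b, b := 0)"
      have "x a > 0" "x b > 0"
        using ab less.prems(1) by (auto simp: S_def order_less_le)
      then have support: "{i\<in>V. ?y i \<noteq> 0} = S - {b}"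
        using ab by (auto simp: S_def)
      have "clique_poly V E s ?y \<le> real (r choose s) * (sum ?y V / real r) ^ s"
      proof (rule less.hyps)
        show "card {i\<in>V. ?y i \<noteq> 0} < card {i\<in>V. x i \<noteq> 0}"
          unfolding support S_def[symmetric] using assms(1) ab(2) by (intro card_Diff1_less) (simp_all add: S_def)
        show "0 \<le> ?y i" if "i \<in> V" for i
          using that \<open>x a > 0\<close> \<open>x b > 0\<close> less.prems(1)[of i] by simp
        show "card K \<le> r" if "is_clique V E K" "K \<subseteq> {i\<in>V. ?y i \<noteq> 0}" for K
          using that less.prems(2) unfolding support S_def by blast
      qed
      moreover have "sum ?y V = sum x V"
        using ab assms(1) unfolding S_def by (intro sum_update_merge) auto
      ultimately show ?thesis
        by simp
    qed
    have "x u \<ge> 0" "x v \<ge> 0"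
      using uv(1,2) less.prems(1) by (auto simp: S_def)
    then show ?thesis
      using clique_poly_le_merge[OF assms(1) uv(3,4), of x s]
        merged[OF uv(1-3)] merged[OF uv(2,1) uv(3)[symmetric]] by (meson order_trans)
  qed
qed

section \<open>The upper bound\<close>

lemma clique_card_le_of_graph_class:
  assumes "(V, E) \<in> graph_class \<Delta> \<omega>" "is_clique V E K"
  shows "card K \<le> \<omega>"
proof -
  have "finite V"
    using assms(1) by (simp add: graph_class_def simple_graph_def)
  then have "finite (card ` {K. is_clique V E K})"
    by (auto intro: finite_subset[of _ "Pow V"] simp: is_clique_def)
  then have "card K \<le> clique_number V E"
    unfolding clique_number_def using assms(2) by (intro Max_ge) auto
  then show ?thesis
    using assms(1) by (simp add: graph_class_def)
qed

lemma degree_le_of_graph_class: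
  assumes "(V, E) \<in> graph_class \<Delta> \<omega>" "v \<in> V"
  shows "degree V E v \<le> \<Delta>"
proof -
  have "finite V"
    using assms(1) by (simp add: graph_class_def simple_graph_def)
  then have "degree V E v \<le> max_degree V E"
    unfolding max_degree_def using assms(2) by (intro Max_ge) auto
  then show ?thesis
    using assms(1) by (simp add: graph_class_def)
qed

definition neighbours :: "nat set \<Rightarrow> nat set set \<Rightarrow> nat \<Rightarrow> nat set" where
  "neighbours V E v = {u\<in>V. {u, v} \<in> E}"

lemma is_clique_insert_iff:
  assumes "v \<in> V"
  shows "is_clique V E (insert v J) \<longleftrightarrow> is_clique V E J \<and> J - {v} \<subseteq> neighbours V E v"
  using assms unfolding is_clique_def neighbours_def by (auto simp: insert_commute)

lemma self_notin_neighbours: "simple_graph V E \<Longrightarrow> v \<notin> neighbours V E v"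
  by (auto simp: simple_graph_def neighbours_def)

lemma cliques_containing_eq_image:
  assumes "simple_graph V E" "v \<in> V"
  shows "{K\<in>cliques V E (Suc s). v \<in> K} = insert v ` {J\<in>cliques V E s. J \<subseteq> neighbours V E v}"
proof -
  have "finite V"
    using assms(1) by (simp add: simple_graph_def)
  have "v \<notin> neighbours V E v"
    using assms(1) by (rule self_notin_neighbours)
  show ?thesis
  proof (intro equalityI subsetI)
    fix K assume K: "K \<in> {K\<in>cliques V E (Suc s). v \<in> K}"
    then have "is_clique V E (insert v (K - {v}))" "card (K - {v}) = s"
      by (auto simp: cliques_def insert_absorb)
    then have "K - {v} \<in> {J\<in>cliques V E s. J \<subseteq> neighbours V E v}"
      unfolding is_clique_insert_iff[OF assms(2)] by (simp add: cliques_def)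
    then show "K \<in> insert v ` {J\<in>cliques V E s. J \<subseteq> neighbours V E v}"
      using K by (auto intro!: image_eqI[of K _ "K - {v}"])
  next
    fix K assume "K \<in> insert v ` {J\<in>cliques V E s. J \<subseteq> neighbours V E v}"
    then obtain J where J: "is_clique V E J" "card J = s" "J \<subseteq> neighbours V E v" "K = insert v J"
      by (auto simp: cliques_def)
    moreover have "finite J" "v \<notin> J"
      using J \<open>finite V\<close> \<open>v \<notin> neighbours V E v\<close> finite_clique by auto
    ultimately show "K \<in> {K\<in>cliques V E (Suc s). v \<in> K}"
      using assms(2) by (auto simp: cliques_def is_clique_insert_iff)
  qed
qed

lemma card_cliques_containing:
  assumes "simple_graph V E" "v \<in> V"
  shows "card {K\<in>cliques V E (Suc s). v \<in> K} = card {J\<in>cliques V E s. J \<subseteq> neighbours V E v}"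
proof -
  have "v \<notin> neighbours V E v"
    using assms(1) by (rule self_notin_neighbours)
  then have "inj_on (insert v) {J\<in>cliques V E s. J \<subseteq> neighbours V E v}"
    by (intro inj_onI) (metis Diff_insert_absorb mem_Collect_eq subsetD)
  then show ?thesis
    unfolding cliques_containing_eq_image[OF assms] by (rule card_image)
qed

lemma clique_poly_indicator:
  assumes "finite V"
  shows "clique_poly V E s (\<lambda>i. of_bool (i \<in> N)) = real (card {J\<in>cliques V E s. J \<subseteq> N})"
proof -
  have "clique_poly V E s (\<lambda>i. of_bool (i \<in> N)) = (\<Sum>J\<in>cliques V E s. of_bool (J \<subseteq> N))"
    unfolding clique_poly_def using assms
    by (intro sum.cong refl prod_of_bool_mem) (auto simp: cliques_def intro: finite_clique)
  then show ?thesis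
    using assms by (simp add: finite_cliques Int_def)
qed

lemma card_cliques_containing_le:
  assumes G: "(V, E) \<in> graph_class \<Delta> \<omega>" and "v \<in> V" "1 \<le> t"
  shows "real (card {K\<in>cliques V E t. v \<in> K})
           \<le> real ((\<omega> - 1) choose (t - 1)) * (real \<Delta> / real (\<omega> - 1)) ^ (t - 1)"
proof -
  define N where "N = neighbours V E v"
  have graph: "simple_graph V E" "finite V"
    using G by (auto simp: graph_class_def simple_graph_def)
  have "card K \<le> \<omega> - 1" if "is_clique V E K" "K \<subseteq> {i\<in>V. of_bool (i \<in> N) \<noteq> (0::real)}" for K
  proof -
    have "K \<subseteq> N" "finite K"
      using that graph by (auto simp: N_def intro: finite_clique)
    moreover have "v \<notin> K"
      using \<open>K \<subseteq> N\<close> self_notin_neighbours[OF graph(1)] by (auto simp: N_def)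
    moreover have "is_clique V E (insert v K)"
      using that \<open>v \<in> V\<close> \<open>K \<subseteq> N\<close> by (auto simp: is_clique_insert_iff N_def)
    ultimately show ?thesis
      using clique_card_le_of_graph_class[OF G] by fastforce
  qed
  then have "clique_poly V E (t - 1) (\<lambda>i. of_bool (i \<in> N))
             \<le> real ((\<omega> - 1) choose (t - 1)) * (sum (\<lambda>i. of_bool (i \<in> N)) V / real (\<omega> - 1)) ^ (t - 1)"
    using graph by (intro clique_poly_le_binomial) auto
  moreover have "sum (\<lambda>i. of_bool (i \<in> N)) V = real (degree V E v)"
    using graph by (simp add: N_def neighbours_def degree_def Int_def)
  moreover have "degree V E v \<le> \<Delta>"
    using G \<open>v \<in> V\<close> by (rule degree_le_of_graph_class)
  moreover have "card {K\<in>cliques V E t. v \<in> K} = card {J\<in>cliques V E (t - 1). J \<subseteq> N}"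
    using card_cliques_containing[OF graph(1) \<open>v \<in> V\<close>, of "t - 1"] assms(3) by (simp add: N_def)
  ultimately show ?thesis
    using graph(2) by (auto simp: clique_poly_indicator elim!: order_trans
        intro!: mult_left_mono power_mono divide_right_mono)
qed

lemma sum_card_cliques_containing:
  assumes "finite V"
  shows "(\<Sum>v\<in>V. card {K\<in>cliques V E t. v \<in> K}) = t * card (cliques V E t)"
proof -
  have "(\<Sum>v\<in>V. card {K\<in>cliques V E t. v \<in> K}) = (\<Sum>v\<in>V. \<Sum>K\<in>cliques V E t. of_bool (v \<in> K))"
    using assms by (simp add: finite_cliques Int_def)
  also have "\<dots> = (\<Sum>K\<in>cliques V E t. \<Sum>v\<in>V. of_bool (v \<in> K))"
    by (rule sum.swap)
  also have "\<dots> = (\<Sum>K\<in>cliques V E t. t)"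
  proof (rule sum.cong[OF refl])
    fix K assume "K \<in> cliques V E t"
    then have "V \<inter> {v. v \<in> K} = K" "card K = t"
      by (auto simp: cliques_def is_clique_def)
    then show "(\<Sum>v\<in>V. of_bool (v \<in> K)) = t"
      using assms by simp
  qed
  finally show ?thesis
    by simp
qed

definition rho_bound :: "nat \<Rightarrow> nat \<Rightarrow> nat \<Rightarrow> real" where
  "rho_bound t \<omega> \<Delta> = 1 / real t * real ((\<omega> - 1) choose (t - 1)) * (real \<Delta> / real (\<omega> - 1)) ^ (t - 1)"

theorem rho_le_rho_bound:
  assumes G: "(V, E) \<in> graph_class \<Delta> \<omega>" and "card V \<ge> 1" "1 \<le> t"
  shows "rho t V E \<le> rho_bound t \<omega> \<Delta>"
proof -
  define b where "b = real ((\<omega> - 1) choose (t - 1)) * (real \<Delta> / real (\<omega> - 1)) ^ (t - 1)"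
  have "finite V"
    using G by (simp add: graph_class_def simple_graph_def)
  have "real t * real (num_cliques t V E) = real (\<Sum>v\<in>V. card {K\<in>cliques V E t. v \<in> K})"
    unfolding sum_card_cliques_containing[OF \<open>finite V\<close>] by (simp add: num_cliques_def cliques_def)
  also have "\<dots> \<le> (\<Sum>v\<in>V. b)"
    unfolding of_nat_sum b_def by (intro sum_mono card_cliques_containing_le[OF G _ assms(3)])
  also have "\<dots> = real (card V) * b"
    by simp
  finally have "real (num_cliques t V E) / real (card V) \<le> 1 / real t * b"
    using assms(2,3) by (simp add: field_simps)
  then show ?thesis
    by (simp add: rho_def rho_bound_def b_def mult.assoc)
qed

section \<open>Turan graphs\<close>

lemma turan_edge_iff: "{a, b} \<in> turan_E n w \<longleftrightarrow> a < n \<and> b < n \<and> a mod w \<noteq> b mod w"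
  unfolding turan_E_def by (auto simp: doubleton_eq_iff)

lemma simple_graph_turan: "simple_graph (turan_V n) (turan_E n w)"
  unfolding simple_graph_def turan_V_def turan_E_def by (auto simp: card_insert_if)

lemma card_turan_clique_le:
  assumes "w > 0" "is_clique (turan_V n) (turan_E n w) K"
  shows "card K \<le> w"
proof -
  have "inj_on (\<lambda>u. u mod w) K"
  proof (rule inj_onI)
    fix a b assume "a \<in> K" "b \<in> K" "a mod w = b mod w"
    then show "a = b"
      using assms(2) by (auto simp: is_clique_def turan_edge_iff)
  qed
  then have "card K = card ((\<lambda>u. u mod w) ` K)"
    by (simp add: card_image)
  also have "\<dots> \<le> card {..<w}"
    using assms(1) by (intro card_mono) auto
  finally show ?thesis
    by simp
qed

lemma add_mult_less_of_less_div:
  fixes c i w :: nat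
  assumes "c < w" "i < n div w"
  shows "c + w * i < n"
proof -
  have "c + w * i < w * Suc i"
    using assms(1) by simp
  also have "\<dots> \<le> w * (n div w)"
    using assms(2) by (intro mult_le_mono2) simp
  also have "\<dots> \<le> n"
    by simp
  finally show ?thesis .
qed

lemma card_residue_class_ge:
  assumes "c < w"
  shows "n div w \<le> card {u\<in>{..<n}. u mod w = c}"
proof -
  have "(\<lambda>i. c + w * i) ` {..<n div w} \<subseteq> {u\<in>{..<n}. u mod w = c}"
    using assms by (auto intro!: add_mult_less_of_less_div)
  moreover have "inj_on (\<lambda>i. c + w * i) {..<n div w}"
    using assms by (intro inj_onI) simp
  ultimately show ?thesis
    using card_inj_on_le[of _ "{..<n div w}"] by fastforce
qed

lemma degree_turan_le:
  assumes "w > 0" "v < n"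
  shows "degree (turan_V n) (turan_E n w) v \<le> n - n div w"
proof -
  let ?C = "{u\<in>{..<n}. u mod w = v mod w}"
  have neighbours: "{u\<in>turan_V n. {u, v} \<in> turan_E n w} = {..<n} - ?C"
    using assms(2) by (auto simp: turan_V_def turan_edge_iff)
  have "degree (turan_V n) (turan_E n w) v = n - card ?C"
    unfolding degree_def neighbours by (subst card_Diff_subset) auto
  also have "\<dots> \<le> n - n div w"
    using card_residue_class_ge[of "v mod w" w n] assms(1) by simp
  finally show ?thesis .
qed

lemma turan_in_graph_class:
  assumes "w > 0" "n - n div w \<le> \<Delta>"
  shows "(turan_V n, turan_E n w) \<in> graph_class \<Delta> w"
proof -
  have "degree (turan_V n) (turan_E n w) v \<le> \<Delta>" if "v \<in> turan_V n" for v
    using degree_turan_le[OF assms(1), of v n] that assms(2) by (simp add: turan_V_def)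
  then have "max_degree (turan_V n) (turan_E n w) \<le> \<Delta>"
    by (simp add: max_degree_def turan_V_def)
  have "finite {K. is_clique (turan_V n) (turan_E n w) K}"
    by (rule finite_subset[of _ "Pow {0..<n}"]) (auto simp: is_clique_def turan_V_def)
  moreover have "is_clique (turan_V n) (turan_E n w) {}"
    by (simp add: is_clique_def)
  ultimately have "clique_number (turan_V n) (turan_E n w) \<le> w"
    unfolding clique_number_def using card_turan_clique_le[OF assms(1)] by (subst Max_le_iff) auto
  then show ?thesis
    using simple_graph_turan \<open>max_degree (turan_V n) (turan_E n w) \<le> \<Delta>\<close>
    by (simp add: graph_class_def)
qed

lemma residue_transversal_in_cliques:
  fixes g :: "nat \<Rightarrow> nat"
  assumes "R \<subseteq> {..<w}" "\<And>\<rho>. \<rho> \<in> R \<Longrightarrow> g \<rho> < n div w"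
  shows "(\<lambda>\<rho>. \<rho> + w * g \<rho>) ` R \<in> cliques (turan_V n) (turan_E n w) (card R)"
proof -
  have elem: "\<rho> + w * g \<rho> < n" "(\<rho> + w * g \<rho>) mod w = \<rho>" if "\<rho> \<in> R" for \<rho>
    using that assms by (auto simp: add_mult_less_of_less_div)
  have "inj_on (\<lambda>\<rho>. \<rho> + w * g \<rho>) R"
    by (rule inj_onI) (metis elem(2))
  moreover have "(\<lambda>\<rho>. \<rho> + w * g \<rho>) ` R \<subseteq> turan_V n"
    using elem(1) by (auto simp: turan_V_def)
  moreover have "{a, b} \<in> turan_E n w"
    if "a \<in> (\<lambda>\<rho>. \<rho> + w * g \<rho>) ` R" "b \<in> (\<lambda>\<rho>. \<rho> + w * g \<rho>) ` R" "a \<noteq> b" for a b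
    using that elem by (auto simp: turan_edge_iff)
  ultimately show ?thesis
    by (simp add: cliques_def is_clique_def card_image)
qed

lemma residue_transversal_eqD:
  fixes w :: nat and g1 g2 :: "nat \<Rightarrow> nat"
  assumes "R1 \<subseteq> {..<w}" "R2 \<subseteq> {..<w}"
    and eq: "(\<lambda>\<rho>. \<rho> + w * g1 \<rho>) ` R1 = (\<lambda>\<rho>. \<rho> + w * g2 \<rho>) ` R2"
  shows "R1 = R2" "\<And>\<rho>. \<rho> \<in> R1 \<Longrightarrow> g1 \<rho> = g2 \<rho>"
proof -
  have residues: "(\<lambda>k. k mod w) ` (\<lambda>\<rho>. \<rho> + w * g \<rho>) ` R = R" if "R \<subseteq> {..<w}" for R g
    using that by (force simp: image_image)
  show "R1 = R2"
    using residues[OF assms(1), of g1] residues[OF assms(2), of g2] eq by simp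
  fix \<rho> assume "\<rho> \<in> R1"
  then obtain \<rho>' where "\<rho>' \<in> R2" "\<rho> + w * g1 \<rho> = \<rho>' + w * g2 \<rho>'"
    using eq by blast
  moreover from this have "\<rho> = \<rho>'"
    using assms(1,2) \<open>\<rho> \<in> R1\<close> by (metis lessThan_iff mod_mult_self2 mod_less subsetD)
  ultimately show "g1 \<rho> = g2 \<rho>"
    using assms(1) \<open>\<rho> \<in> R1\<close> by (cases "w = 0") auto
qed

lemma turan_num_cliques_ge:
  "(w choose t) * (n div w) ^ t \<le> num_cliques t (turan_V n) (turan_E n w)"
proof -
  define Rs where "Rs = {R. R \<subseteq> {..<w} \<and> card R = t}"
  define D where "D = (SIGMA R:Rs. R \<rightarrow>\<^sub>E {..<n div w})"
  define F where "F = (\<lambda>(R, g). (\<lambda>\<rho>. \<rho> + w * g \<rho>) ` R)"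
  have Rs: "R \<subseteq> {..<w}" "finite R" "card R = t" if "R \<in> Rs" for R
    using that finite_subset by (auto simp: Rs_def)
  have "card D = (\<Sum>R\<in>Rs. card (R \<rightarrow>\<^sub>E {..<n div w}))"
    unfolding D_def using Rs(2) by (intro card_SigmaI) (auto simp: Rs_def intro: finite_PiE)
  also have "\<dots> = (w choose t) * (n div w) ^ t"
    using Rs by (simp add: card_PiE Rs_def[symmetric] n_subsets[of "{..<w}" t, folded Rs_def])
  finally have "card D = (w choose t) * (n div w) ^ t" .
  moreover have "F ` D \<subseteq> cliques (turan_V n) (turan_E n w) t"
  proof (clarsimp simp: D_def F_def)
    fix R g assume "R \<in> Rs" "g \<in> R \<rightarrow>\<^sub>E {..<n div w}"
    then show "(\<lambda>\<rho>. \<rho> + w * g \<rho>) ` R \<in> cliques (turan_V n) (turan_E n w) t"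
      using residue_transversal_in_cliques[of R w g n] Rs by auto
  qed
  moreover have "inj_on F D"
  proof (rule inj_onI, clarsimp simp: D_def F_def)
    fix R1 g1 R2 g2
    assume R: "R1 \<in> Rs" "R2 \<in> Rs" and g: "g1 \<in> R1 \<rightarrow>\<^sub>E {..<n div w}" "g2 \<in> R2 \<rightarrow>\<^sub>E {..<n div w}"
      and eq: "(\<lambda>\<rho>. \<rho> + w * g1 \<rho>) ` R1 = (\<lambda>\<rho>. \<rho> + w * g2 \<rho>) ` R2"
    then show "R1 = R2 \<and> g1 = g2"
      using residue_transversal_eqD[OF Rs(1)[OF R(1)] Rs(1)[OF R(2)] eq] by (auto intro: PiE_ext)
  qed
  moreover have "finite (cliques (turan_V n) (turan_E n w) t)"
    by (simp add: finite_cliques turan_V_def)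
  ultimately show ?thesis
    unfolding num_cliques_def cliques_def[symmetric] by (metis card_inj_on_le)
qed

lemma power_div_mult_one_minus:
  fixes D d :: real
  assumes "D > 0" "d > 0"
  shows "(D / d) ^ s * (1 - d / D) ^ Suc s = ((D - d) / d) ^ Suc s * (d / D)"
proof -
  have merge: "D / d * (1 - d / D) = (D - d) / d" and split: "1 - d / D = (D - d) / d * (d / D)"
    using assms by (simp_all add: field_simps)
  have "(D / d) ^ s * (1 - d / D) ^ Suc s = (D / d * (1 - d / D)) ^ s * (1 - d / D)"
    by (simp only: power_mult_distrib power_Suc2 mult.assoc)
  then show ?thesis
    unfolding merge unfolding split by (simp only: power_Suc2 mult.assoc)
qed

lemma add_div_pred_div:
  fixes \<Delta> \<omega> :: nat
  assumes "2 \<le> \<omega>"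
  shows "(\<Delta> + \<Delta> div (\<omega> - 1)) div \<omega> = \<Delta> div (\<omega> - 1)"
proof -
  define d where "d = \<omega> - 1"
  have "\<omega> = Suc d" "d > 0"
    using assms by (auto simp: d_def)
  have "\<Delta> + \<Delta> div d = \<Delta> mod d + \<omega> * (\<Delta> div d)"
    using div_mult_mod_eq[of \<Delta> d] by (simp add: \<open>\<omega> = Suc d\<close> algebra_simps)
  moreover have "\<Delta> mod d < \<omega>"
    using \<open>d > 0\<close> \<open>\<omega> = Suc d\<close> by (simp add: less_SucI)
  ultimately show ?thesis
    by (simp add: d_def)
qed

lemma turan_add_div_in_graph_class:
  fixes \<Delta> \<omega> :: nat
  assumes "2 \<le> \<omega>"
  defines "n \<equiv> \<Delta> + \<Delta> div (\<omega> - 1)"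
  shows "(turan_V n, turan_E n \<omega>) \<in> graph_class \<Delta> \<omega>"
  using assms(1) add_div_pred_div[OF assms(1), of \<Delta>] by (intro turan_in_graph_class) (simp_all add: n_def)

lemma rho_bound_eq_binomial:
  assumes "1 \<le> t" "1 \<le> \<omega>"
  shows "rho_bound t \<omega> \<Delta> = real (\<omega> choose t) / real \<omega> * (real \<Delta> / real (\<omega> - 1)) ^ (t - 1)"
proof -
  have "t * (\<omega> choose t) = \<omega> * ((\<omega> - 1) choose (t - 1))"
    using assms(1) by (intro times_binomial_minus1_eq) simp
  then have "1 / real t * real ((\<omega> - 1) choose (t - 1)) = real (\<omega> choose t) / real \<omega>"
    using assms by (simp add: field_simps flip: of_nat_mult)
  then show ?thesis
    unfolding rho_bound_def by simp
qed

lemma turan_rho_ge: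
  "real (w choose t) * real (n div w) ^ t / real n \<le> rho t (turan_V n) (turan_E n w)"
proof -
  have "real ((w choose t) * (n div w) ^ t) \<le> real (num_cliques t (turan_V n) (turan_E n w))"
    using turan_num_cliques_ge by (rule of_nat_mono)
  then show ?thesis
    unfolding rho_def turan_V_def by (simp add: divide_right_mono)
qed

lemma rho_bound_le_turan_rho:
  fixes t \<omega> \<Delta> :: nat
  assumes "1 \<le> t" "2 \<le> \<omega>" "\<omega> - 1 \<le> \<Delta>"
  defines "n \<equiv> \<Delta> + \<Delta> div (\<omega> - 1)"
  shows "rho_bound t \<omega> \<Delta> * (1 - real (\<omega> - 1) / real \<Delta>) ^ t \<le> rho t (turan_V n) (turan_E n \<omega>)"
proof -
  define d where "d = \<omega> - 1"
  define q where "q = \<Delta> div d"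
  have "d > 0" "\<Delta> > 0" "n > 0" "\<omega> = Suc d"
    using assms by (auto simp: d_def n_def)
  obtain s where "t = Suc s"
    using assms(1) by (cases t) auto
  have "\<Delta> = d * q + \<Delta> mod d"
    by (simp add: q_def)
  then have "\<Delta> < d * q + d"
    using mod_less_divisor[OF \<open>d > 0\<close>, of \<Delta>] by linarith
  then have "real \<Delta> < real d * (real q + 1)"
    by (simp add: algebra_simps flip: of_nat_mult of_nat_add)
  then have q_ge: "(real \<Delta> - real d) / real d \<le> real q"
    using \<open>d > 0\<close> by (simp add: field_simps)
  have "d * n \<le> \<omega> * \<Delta>"
    using div_times_less_eq_dividend[of \<Delta> d] by (simp add: n_def \<open>\<omega> = Suc d\<close> algebra_simps d_def[symmetric])
  then have "real d * real n \<le> real \<omega> * real \<Delta>"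
    by (metis of_nat_le_iff of_nat_mult)
  then have ratio: "real d / real \<Delta> \<le> real \<omega> / real n"
    using \<open>\<Delta> > 0\<close> \<open>n > 0\<close> by (simp add: field_simps)
  have "rho_bound t \<omega> \<Delta> * (1 - real d / real \<Delta>) ^ t
        = real (\<omega> choose t) / real \<omega> * ((real \<Delta> / real d) ^ s * (1 - real d / real \<Delta>) ^ Suc s)"
    using assms(1,2) by (simp add: rho_bound_eq_binomial d_def \<open>t = Suc s\<close> mult.assoc)
  also have "\<dots> = real (\<omega> choose t) / real \<omega> * (((real \<Delta> - real d) / real d) ^ t * (real d / real \<Delta>))"
    using \<open>d > 0\<close> \<open>\<Delta> > 0\<close> by (subst power_div_mult_one_minus) (simp_all add: \<open>t = Suc s\<close>)
  also have "\<dots> \<le> real (\<omega> choose t) / real \<omega> * (real q ^ t * (real \<omega> / real n))"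
    using q_ge ratio assms(3) by (intro mult_left_mono mult_mono power_mono) (auto simp: d_def)
  also have "\<dots> = real (\<omega> choose t) * real (n div \<omega>) ^ t / real n"
    using assms(2) add_div_pred_div[OF assms(2)] by (simp add: n_def q_def d_def)
  also have "\<dots> \<le> rho t (turan_V n) (turan_E n \<omega>)"
    by (rule turan_rho_ge)
  finally show ?thesis
    by (simp add: d_def)
qed

lemma rho_le_f_sup:
  assumes "(V, E) \<in> graph_class \<Delta> \<omega>" "card V \<ge> 1" "1 \<le> t"
  shows "rho t V E \<le> f_sup t \<Delta> \<omega>"
proof -
  have "bdd_above {rho t V E | V E. (V, E) \<in> graph_class \<Delta> \<omega> \<and> card V \<ge> 1}"
    using assms(3) rho_le_rho_bound by (intro bdd_aboveI[where M = "rho_bound t \<omega> \<Delta>"]) blast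
  then show ?thesis
    unfolding f_sup_def using assms(1,2) by (intro cSup_upper) blast+
qed

lemma f_sup_le_rho_bound:
  assumes "1 \<le> \<Delta>" "1 \<le> t" "2 \<le> \<omega>"
  shows "f_sup t \<Delta> \<omega> \<le> rho_bound t \<omega> \<Delta>"
proof -
  define n where "n = \<Delta> + \<Delta> div (\<omega> - 1)"
  have "(turan_V n, turan_E n \<omega>) \<in> graph_class \<Delta> \<omega>" "card (turan_V n) \<ge> 1"
    using turan_add_div_in_graph_class[OF assms(3)] assms(1) by (auto simp: n_def turan_V_def)
  then have "{rho t V E | V E. (V, E) \<in> graph_class \<Delta> \<omega> \<and> card V \<ge> 1} \<noteq> {}"
    by blast
  then show ?thesis
    unfolding f_sup_def using assms(2) rho_le_rho_bound by (intro cSup_least) blast+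
qed

lemma turan_rho_le_f_sup:
  assumes "1 \<le> \<Delta>" "1 \<le> t" "2 \<le> \<omega>"
  shows "rho t (turan_V (\<Delta> + \<Delta> div (\<omega> - 1))) (turan_E (\<Delta> + \<Delta> div (\<omega> - 1)) \<omega>) \<le> f_sup t \<Delta> \<omega>"
  using turan_add_div_in_graph_class[OF assms(3)] assms(1,2)
  by (intro rho_le_f_sup) (simp_all add: turan_V_def)

section \<open>Asymptotics\<close>

lemma asymp_equiv_squeeze:
  fixes g h b :: "'a \<Rightarrow> real"
  assumes "(g \<longlongrightarrow> 1) F" "eventually (\<lambda>x. b x * g x \<le> h x \<and> h x \<le> b x) F"
  shows "h \<sim>[F] b"
proof -
  have "(\<lambda>x. b x * g x) \<sim>[F] (\<lambda>x. b x * 1)"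
    using assms(1) by (intro asymp_equiv_mult asymp_equiv_refl tendsto_imp_asymp_equiv_const) simp_all
  then have "(\<lambda>x. b x * g x) \<sim>[F] b"
    by simp
  then show ?thesis
    by (rule asymp_equiv_sandwich_real[OF _ asymp_equiv_refl]) (rule eventually_mono[OF assms(2)], simp)
qed

theorem mainTheorem6:
  fixes t \<omega> :: nat
  assumes "2 \<le> t" and "t \<le> \<omega>"
  shows "((\<lambda>\<Delta>::nat. f_sup t \<Delta> \<omega>) \<sim>[at_top]
           (\<lambda>\<Delta>. rho t (turan_V (\<Delta> + \<Delta> div (\<omega> - 1))) (turan_E (\<Delta> + \<Delta> div (\<omega> - 1)) \<omega>))) \<and>
         ((\<lambda>\<Delta>::nat. f_sup t \<Delta> \<omega>) \<sim>[at_top]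
           (\<lambda>\<Delta>. (1 / real t) * real ((\<omega> - 1) choose (t - 1)) * (real \<Delta> / real (\<omega> - 1)) ^ (t - 1)))"
proof -
  let ?f = "\<lambda>\<Delta>::nat. f_sup t \<Delta> \<omega>"
  let ?T = "\<lambda>\<Delta>. rho t (turan_V (\<Delta> + \<Delta> div (\<omega> - 1))) (turan_E (\<Delta> + \<Delta> div (\<omega> - 1)) \<omega>)"
  let ?B = "\<lambda>\<Delta>. rho_bound t \<omega> \<Delta>"
  let ?g = "\<lambda>\<Delta>::nat. (1 - real (\<omega> - 1) / real \<Delta>) ^ t"
  have "?g \<longlonglongrightarrow> (1 - 0) ^ t"
    by (intro tendsto_intros lim_const_over_n)
  then have lim: "?g \<longlonglongrightarrow> 1"
    by simp
  have bounds: "eventually (\<lambda>\<Delta>. ?B \<Delta> * ?g \<Delta> \<le> ?T \<Delta> \<and> ?T \<Delta> \<le> ?f \<Delta> \<and> ?f \<Delta> \<le> ?B \<Delta>) at_top"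
    using eventually_ge_at_top[of "max 1 (\<omega> - 1)"]
  proof eventually_elim
    case (elim \<Delta>)
    then show ?case
      using assms rho_bound_le_turan_rho[of t \<omega> \<Delta>] turan_rho_le_f_sup[of \<Delta> t \<omega>]
        f_sup_le_rho_bound[of \<Delta> t \<omega>] by simp
  qed
  have "?f \<sim>[at_top] ?B"
    using lim by (rule asymp_equiv_squeeze) (rule eventually_mono[OF bounds], simp)
  moreover have "?T \<sim>[at_top] ?B"
    using lim by (rule asymp_equiv_squeeze) (rule eventually_mono[OF bounds], simp)
  ultimately show ?thesis
    unfolding rho_bound_def by (meson asymp_equiv_symI asymp_equiv_trans)
qed

end
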